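(* Suppose that $\lim_{M\to\infty}\sup_{r>0}\frac{\Psi^*(r)}{\Psi^*(Mr)}=0$. Then for each fixed $c>0$ the function $H_c(M):=c^{-d}\sup_{t>0}\mathbb P_0\big(|X_t|>cM\Phi^{-1}(t)\big)$ satisfies $\lim_{M\to\infty}H_c(M)=0$.
   Context: Let $d\ge1$ and let $X=(X_t,\mathbb P_x)$ be a symmetric Lévy process on $\mathbb R^d$ with $\mathbb P_x(X_0=x)=1$ and $\mathbb E_x[e^{i\xi\cdot(X_t-X_0)}]=e^{-t\Psi(\xi)}$, where $\Psi(\xi)=\sum_{i,j}a_{ij}\xi_i\xi_j+\int_{\mathbb R^d}(1-\cos(\xi\cdot y))J(y)dy$ with $A=(a_{ij})$ constant symmetric nonnegative definite and $J\ge0$ symmetric with $\int(1\wedge|z|^2)J(z)dz<\infty$; $X$ is not a compound Poisson process ($\Psi$ unbounded). Put $\Psi^*(r)=\sup_{|z|\le r}\Psi(z)$, $\Phi(r)=1/\Psi^*(1/r)$ ($r>0$), $\Phi(0)=0$, $\Phi^{-1}(t)=\inf\{s>0:\Phi(s)>t\}$. *)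

theory Defs
  imports "HOL-Probability.Probability"
begin

text \<open>Characteristic exponent (Levy-Khintchine form) of a symmetric Levy process on the
  Euclidean space 'a (of dimension d = DIM('a)):
  Psi(xi) = xi . A xi + int (1 - cos(xi . y)) J(y) dy,
  where A is a symmetric nonnegative definite linear map (the matrix (a_ij)).\<close>
definition LK_exponent :: "('a::euclidean_space \<Rightarrow> 'a) \<Rightarrow> ('a \<Rightarrow> real) \<Rightarrow> 'a \<Rightarrow> real" where
  "LK_exponent A J \<xi> = \<xi> \<bullet> A \<xi> + (LINT y|lborel. (1 - cos (\<xi> \<bullet> y)) * J y)"

definition char_fun :: "'a::euclidean_space measure \<Rightarrow> 'a \<Rightarrow> complex" where
  "char_fun \<mu> \<xi> = (CLINT x|\<mu>. cis (\<xi> \<bullet> x))"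

definition Psi_star :: "('a::euclidean_space \<Rightarrow> real) \<Rightarrow> real \<Rightarrow> real" where
  "Psi_star \<Psi> r = (SUP z\<in>{z. norm z \<le> r}. \<Psi> z)"

definition Phi_fun :: "('a::euclidean_space \<Rightarrow> real) \<Rightarrow> real \<Rightarrow> real" where
  "Phi_fun \<Psi> r = (if r = 0 then 0 else 1 / Psi_star \<Psi> (1 / r))"

definition Phi_inv :: "('a::euclidean_space \<Rightarrow> real) \<Rightarrow> real \<Rightarrow> real" where
  "Phi_inv \<Psi> t = Inf {s. s > 0 \<and> Phi_fun \<Psi> s > t}"

end

theory Submission
  imports Defs
begin

text \<open>Levy's truncation inequality bounds the tail of the projection of \<open>X\<^sub>t\<close> on a unit vector
  by the average of \<open>1 - exp (-t \<Psi>)\<close> over a segment, hence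
  \<open>P(|X\<^sub>t| > r) \<le> 2 d t \<Psi>\<^sup>*(2d/r)\<close> after a union bound over the coordinates.
  For \<open>r = c M \<Phi>\<^sup>-\<^sup>1(t)\<close> and \<open>K = c M / (4d)\<close> one has \<open>K \<cdot> 2d/r = 1/(2 \<Phi>\<^sup>-\<^sup>1(t))\<close>, and
  \<open>t \<Psi>\<^sup>*(1/(2 \<Phi>\<^sup>-\<^sup>1(t))) < 1\<close> by the definition of \<open>\<Phi>\<^sup>-\<^sup>1\<close>; so the tail is at most
  \<open>2d sup\<^sub>r \<Psi>\<^sup>*(r)/\<Psi>\<^sup>*(K r)\<close>, uniformly in \<open>t\<close>, which tends to \<open>0\<close> by hypothesis.\<close>

lemma integral_one_minus_cos:
  fixes x u :: real
  assumes "x \<noteq> 0" "0 \<le> u"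
  shows "(LBINT v:{-u..u}. 1 - cos (v * x)) = 2 * (u - sin (u * x) / x)"
proof -
  have "(LBINT v:{-u..u}. 1 - cos (v * x)) = (u - sin (u * x) / x) - (- u - sin (- u * x) / x)"
    unfolding set_lebesgue_integral_def using assms
    by (intro integral_FTC_atLeastAtMost)
       (auto intro!: derivative_eq_intros continuous_intros
             simp flip: has_real_derivative_iff_has_vector_derivative)
  then show ?thesis by simp
qed

lemma indicator_le_integral_one_minus_cos:
  fixes y u :: real
  assumes "0 < u"
  shows "u * indicator {y. 2 / u \<le> \<bar>y\<bar>} y \<le> (LBINT v:{-u..u}. 1 - cos (v * y))"
proof (cases "y = 0")
  case True
  then show ?thesis using assms by simp
next
  case False
  define q where "q = sin (u * y) / y"
  have int_eq: "(LBINT v:{-u..u}. 1 - cos (v * y)) = 2 * (u - q)"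
    unfolding q_def by (rule integral_one_minus_cos[OF False]) (use assms in simp)
  have "\<bar>q\<bar> \<le> u"
    using abs_sin_x_le_abs_x[of "u * y"] False assms by (simp add: q_def abs_mult divide_le_eq)
  moreover have "q \<le> u / 2" if "2 / u \<le> \<bar>y\<bar>"
  proof -
    have "q \<le> 1 / \<bar>y\<bar>"
      using abs_sin_le_one[of "u * y"] False by (auto simp: q_def divide_le_eq abs_le_iff split: abs_split)
    also have "\<dots> \<le> u / 2" using that assms False by (simp add: field_simps)
    finally show ?thesis .
  qed
  ultimately show ?thesis unfolding int_eq by (auto split: split_indicator)
qed

lemma truncation_inequality:
  fixes M :: "'a::euclidean_space measure" and e :: 'a
  assumes "prob_space M" and sets_M: "sets M = sets borel" and u: "0 < u"
  shows "u * measure M {x. 2 / u \<le> \<bar>x \<bullet> e\<bar>} \<le> (LBINT v:{-u..u}. 1 - Re (char_fun M (v *\<^sub>R e)))"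
proof -
  interpret prob_space M by fact
  interpret pair_sigma_finite M lborel ..
  note sets_M[measurable_cong]
  define f where "f = (\<lambda>(x::'a, v::real). indicator {-u..u} v * (1 - cos (v * (x \<bullet> e))))"
  have [measurable]: "f \<in> borel_measurable (M \<Otimes>\<^sub>M lborel)"
    unfolding f_def by measurable
  have int_f: "integrable (M \<Otimes>\<^sub>M lborel) f"
  proof -
    have "integrable (M \<Otimes>\<^sub>M lborel) (\<lambda>p. indicator (space M \<times> {-u..u}) p *\<^sub>R (2::real))"
      using u by (intro integrableI_bounded_set_indicator)
        (auto simp: lborel.emeasure_pair_measure_Times ennreal_mult_less_top emeasure_space_1)
    then show ?thesis
    proof (rule Bochner_Integration.integrable_bound)
      show "AE p in M \<Otimes>\<^sub>M lborel. norm (f p) \<le> norm (indicator (space M \<times> {-u..u}) p *\<^sub>R (2::real))"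
        by (intro AE_I2) (auto simp: f_def space_pair_measure indicator_def)
    qed measurable
  qed
  have Re_char: "1 - Re (char_fun M \<xi>) = (\<integral>x. 1 - cos (\<xi> \<bullet> x) \<partial>M)" for \<xi>
  proof -
    have "(\<integral>x. 1 - cos (\<xi> \<bullet> x) \<partial>M) = 1 - (\<integral>x. cos (\<xi> \<bullet> x) \<partial>M)"
      by (subst Bochner_Integration.integral_diff)
         (auto intro!: integrable_const_bound[where B=1] simp: prob_space)
    moreover have "Re (char_fun M \<xi>) = (\<integral>x. Re (cis (\<xi> \<bullet> x)) \<partial>M)"
      unfolding char_fun_def
      by (rule integral_Re[symmetric])
         (auto intro!: integrable_const_bound[where B=1] simp: cis_conv_exp)
    ultimately show ?thesis by simp
  qed
  have "u * measure M {x. 2 / u \<le> \<bar>x \<bullet> e\<bar>}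
      = (\<integral>x. u * indicator {y. 2 / u \<le> \<bar>y\<bar>} (x \<bullet> e) \<partial>M)"
  proof -
    have "(\<lambda>x. u * indicator {y. 2 / u \<le> \<bar>y\<bar>} (x \<bullet> e))
        = (\<lambda>x. u * indicator {x. 2 / u \<le> \<bar>x \<bullet> e\<bar>} x)"
      by (auto simp: indicator_def)
    then show ?thesis using sets_eq_imp_space_eq[OF sets_M] by simp
  qed
  also have "\<dots> \<le> (\<integral>x. (\<integral>v. f (x, v) \<partial>lborel) \<partial>M)"
  proof (rule integral_mono)
    show "integrable M (\<lambda>x. \<integral>v. f (x, v) \<partial>lborel)"
      by (rule integrable_fst'[OF int_f])
    show "u * indicator {y. 2 / u \<le> \<bar>y\<bar>} (x \<bullet> e) \<le> (\<integral>v. f (x, v) \<partial>lborel)" for x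
      using indicator_le_integral_one_minus_cos[OF u, of "x \<bullet> e"]
      by (simp add: f_def set_lebesgue_integral_def mult.commute)
  qed (auto intro!: integrable_const_bound[where B=1])
  also have "\<dots> = (\<integral>v. (\<integral>x. f (x, v) \<partial>M) \<partial>lborel)"
    using Fubini_integral[of "\<lambda>x v. f (x, v)"] int_f by simp
  also have "\<dots> = (LBINT v:{-u..u}. 1 - Re (char_fun M (v *\<^sub>R e)))"
    by (simp add: f_def Re_char set_lebesgue_integral_def mult.commute inner_commute)
  finally show ?thesis .
qed

lemma coordinate_tail_le_exponent_bound:
  fixes N :: "'a::euclidean_space measure" and \<Psi> :: "'a \<Rightarrow> real"
  assumes "prob_space N" "sets N = sets borel" "norm e = 1" "0 < u" "0 \<le> t" "0 \<le> B"
    and char: "\<And>\<xi>. char_fun N \<xi> = complex_of_real (exp (- t * \<Psi> \<xi>))"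
    and bound: "\<And>\<xi>. norm \<xi> \<le> u \<Longrightarrow> \<Psi> \<xi> \<le> B"
  shows "measure N {x. 2 / u \<le> \<bar>x \<bullet> e\<bar>} \<le> 2 * t * B"
proof -
  have "u * measure N {x. 2 / u \<le> \<bar>x \<bullet> e\<bar>}
      \<le> (LBINT v:{-u..u}. 1 - exp (- t * \<Psi> (v *\<^sub>R e)))"
    using truncation_inequality[OF assms(1,2,4), of e] by (simp add: char)
  also have "\<dots> \<le> (LBINT v:{-u..u}. t * B)"
    unfolding set_lebesgue_integral_def
  proof (rule integral_mono')
    show "integrable lborel (\<lambda>v. indicator {-u..u} v *\<^sub>R (t * B))"
      by (simp add: integrable_indicator_iff emeasure_lborel_Icc_eq)
    fix v :: real
    have "1 - exp (- t * \<Psi> (v *\<^sub>R e)) \<le> t * \<Psi> (v *\<^sub>R e)"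
      using exp_ge_add_one_self[of "- t * \<Psi> (v *\<^sub>R e)"] by simp
    also have "\<dots> \<le> t * B" if "v \<in> {-u..u}"
      using that \<open>norm e = 1\<close> \<open>0 \<le> t\<close> by (intro mult_left_mono bound) auto
    finally show "indicator {-u..u} v *\<^sub>R (1 - exp (- t * \<Psi> (v *\<^sub>R e)))
        \<le> indicator {-u..u} v *\<^sub>R (t * B)"
      by (auto split: split_indicator)
    show "0 \<le> indicator {-u..u} v *\<^sub>R (t * B)"
      using assms by simp
  qed
  also have "\<dots> = u * (2 * t * B)"
    using \<open>0 < u\<close> by (simp add: set_integral_const)
  finally show ?thesis
    using \<open>0 < u\<close> by simp
qed

lemma norm_tail_le_exponent_bound:
  fixes N :: "'a::euclidean_space measure" and \<Psi> :: "'a \<Rightarrow> real" and r t B :: real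
  assumes "prob_space N" and sets_N: "sets N = sets borel" and "0 < r" "0 \<le> t" "0 \<le> B"
    and char: "\<And>\<xi>. char_fun N \<xi> = complex_of_real (exp (- t * \<Psi> \<xi>))"
    and bound: "\<And>\<xi>. norm \<xi> \<le> 2 * real DIM('a) / r \<Longrightarrow> \<Psi> \<xi> \<le> B"
  shows "measure N {x. r < norm x} \<le> 2 * real DIM('a) * t * B"
proof -
  interpret prob_space N by fact
  define u where "u = 2 * real DIM('a) / r"
  have u: "0 < u" "2 / u = r / real DIM('a)"
    using \<open>0 < r\<close> by (auto simp: u_def)
  have [measurable]: "{x. 2 / u \<le> \<bar>x \<bullet> i\<bar>} \<in> sets N" for i :: 'a
    unfolding sets_N by measurable
  have "{x::'a. r < norm x} \<subseteq> (\<Union>i\<in>Basis. {x. 2 / u \<le> \<bar>x \<bullet> i\<bar>})"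
  proof
    fix x :: 'a
    assume "x \<in> {x. r < norm x}"
    then have "r < norm x" by simp
    show "x \<in> (\<Union>i\<in>Basis. {x. 2 / u \<le> \<bar>x \<bullet> i\<bar>})"
    proof (rule ccontr)
      assume "x \<notin> (\<Union>i\<in>Basis. {x. 2 / u \<le> \<bar>x \<bullet> i\<bar>})"
      then have "\<And>i. i \<in> Basis \<Longrightarrow> \<bar>x \<bullet> i\<bar> < r / real DIM('a)"
        using u by auto
      then have "norm x < (\<Sum>i\<in>(Basis::'a set). r / real DIM('a))"
        using norm_le_l1[of x] sum_strict_mono[of Basis "\<lambda>i. \<bar>x \<bullet> i\<bar>"] by fastforce
      then show False
        using \<open>r < norm x\<close> by simp
    qed
  qed
  then have "measure N {x. r < norm x} \<le> measure N (\<Union>i\<in>Basis. {x. 2 / u \<le> \<bar>x \<bullet> i\<bar>})"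
    by (intro finite_measure_mono) auto
  also have "\<dots> \<le> (\<Sum>i\<in>Basis. measure N {x. 2 / u \<le> \<bar>x \<bullet> i\<bar>})"
    by (intro measure_UNION_le) auto
  also have "\<dots> \<le> (\<Sum>i\<in>(Basis::'a set). 2 * t * B)"
    by (intro sum_mono coordinate_tail_le_exponent_bound[OF assms(1,2) _ u(1) assms(4,5) char])
       (auto simp: u_def bound)
  finally show ?thesis
    by simp
qed

lemma one_minus_cos_le_square: "1 - cos x \<le> (x::real)\<^sup>2"
proof -
  have "1 - cos x = 2 * (sin (x / 2))\<^sup>2"
    using cos_double_sin[of "x / 2"] by simp
  also have "\<dots> \<le> 2 * (x / 2)\<^sup>2"
    using abs_sin_x_le_abs_x[of "x / 2"] by (simp only: abs_le_square_iff)
  also have "\<dots> \<le> x\<^sup>2"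
    by (simp add: power_divide)
  finally show ?thesis .
qed

lemma one_minus_cos_inner_le:
  fixes \<xi> y :: "'a::euclidean_space"
  shows "1 - cos (\<xi> \<bullet> y) \<le> max 2 ((norm \<xi>)\<^sup>2) * min 1 ((norm y)\<^sup>2)"
proof (cases "(norm y)\<^sup>2 \<le> 1")
  case True
  have "1 - cos (\<xi> \<bullet> y) \<le> (\<xi> \<bullet> y)\<^sup>2"
    by (rule one_minus_cos_le_square)
  also have "\<dots> \<le> (norm \<xi>)\<^sup>2 * (norm y)\<^sup>2"
    by (metis Cauchy_Schwarz_ineq2 abs_le_square_iff abs_norm_cancel norm_mult power_mult_distrib real_norm_def)
  also have "\<dots> \<le> max 2 ((norm \<xi>)\<^sup>2) * min 1 ((norm y)\<^sup>2)"
    using True by (simp add: mult_right_mono)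
  finally show ?thesis .
next
  case False
  then show ?thesis
    using cos_ge_minus_one[of "\<xi> \<bullet> y"] by (simp add: le_max_iff_disj)
qed

lemma LK_integrand_integrable:
  fixes J :: "'a::euclidean_space \<Rightarrow> real"
  assumes "J \<in> borel_measurable lborel" "\<And>z. 0 \<le> J z"
    and "integrable lborel (\<lambda>z. min 1 ((norm z)\<^sup>2) * J z)"
  shows "integrable lborel (\<lambda>y. (1 - cos (\<xi> \<bullet> y)) * J y)"
proof (rule Bochner_Integration.integrable_bound)
  show "integrable lborel (\<lambda>y. max 2 ((norm \<xi>)\<^sup>2) * (min 1 ((norm y)\<^sup>2) * J y))"
    using assms(3) by simp
  show "AE y in lborel. norm ((1 - cos (\<xi> \<bullet> y)) * J y)
      \<le> norm (max 2 ((norm \<xi>)\<^sup>2) * (min 1 ((norm y)\<^sup>2) * J y))"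
    using one_minus_cos_inner_le[of \<xi>] assms(2)
    by (intro AE_I2) (simp add: abs_mult mult_right_mono mult.assoc[symmetric])
qed (use assms(1) in measurable)

lemma LK_exponent_nonneg:
  assumes "\<And>x. 0 \<le> x \<bullet> A x" "\<And>z. 0 \<le> J z"
  shows "0 \<le> LK_exponent A J \<xi>"
  unfolding LK_exponent_def using assms by (simp add: Bochner_Integration.integral_nonneg)

lemma LK_exponent_le_quadratic:
  fixes J :: "'a::euclidean_space \<Rightarrow> real"
  assumes "linear A" "J \<in> borel_measurable lborel" "\<And>z. 0 \<le> J z"
    and J_int: "integrable lborel (\<lambda>z. min 1 ((norm z)\<^sup>2) * J z)"
  obtains C where "\<And>\<xi>. LK_exponent A J \<xi> \<le> C * max 2 ((norm \<xi>)\<^sup>2)"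
proof -
  obtain B where B: "\<And>x. norm (A x) \<le> B * norm x"
    using linear_bounded[OF \<open>linear A\<close>] by blast
  define I where "I = (LINT y|lborel. min 1 ((norm y)\<^sup>2) * J y)"
  have "LK_exponent A J \<xi> \<le> (\<bar>B\<bar> + I) * max 2 ((norm \<xi>)\<^sup>2)" for \<xi>
  proof -
    have "\<xi> \<bullet> A \<xi> \<le> norm \<xi> * (B * norm \<xi>)"
      using norm_cauchy_schwarz[of \<xi> "A \<xi>"] B[of \<xi>] by (meson mult_left_mono norm_ge_zero order_trans)
    also have "\<dots> \<le> \<bar>B\<bar> * max 2 ((norm \<xi>)\<^sup>2)"
      by (simp add: power2_eq_square mult.left_commute)
         (intro order_trans[OF mult_right_mono[OF abs_ge_self] mult_left_mono], auto)
    finally have "\<xi> \<bullet> A \<xi> \<le> \<bar>B\<bar> * max 2 ((norm \<xi>)\<^sup>2)" .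
    moreover have "(LINT y|lborel. (1 - cos (\<xi> \<bullet> y)) * J y)
        \<le> (LINT y|lborel. max 2 ((norm \<xi>)\<^sup>2) * (min 1 ((norm y)\<^sup>2) * J y))"
      using one_minus_cos_inner_le[of \<xi>] assms(3)
      by (intro integral_mono LK_integrand_integrable[OF assms(2-4)] integrable_mult_right J_int)
         (auto simp: mult.assoc[symmetric] intro!: mult_right_mono)
    then have "(LINT y|lborel. (1 - cos (\<xi> \<bullet> y)) * J y) \<le> max 2 ((norm \<xi>)\<^sup>2) * I"
      by (simp add: I_def)
    ultimately show ?thesis
      unfolding LK_exponent_def by (simp add: algebra_simps)
  qed
  then show ?thesis using that by blast
qed

lemma LK_exponent_bdd_above_ball:
  fixes J :: "'a::euclidean_space \<Rightarrow> real"
  assumes "linear A" "J \<in> borel_measurable lborel" "\<And>z. 0 \<le> J z"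
    and "integrable lborel (\<lambda>z. min 1 ((norm z)\<^sup>2) * J z)" "\<And>x. 0 \<le> x \<bullet> A x"
  shows "bdd_above (LK_exponent A J ` {z. norm z \<le> r})"
proof -
  obtain C where C: "\<And>\<xi>. LK_exponent A J \<xi> \<le> C * max 2 ((norm \<xi>)\<^sup>2)"
    using LK_exponent_le_quadratic[OF assms(1-4)] by blast
  have "0 \<le> C"
    using C[of 0] LK_exponent_nonneg[where A=A and J=J and \<xi>=0] assms(5,3) by (simp add: zero_le_mult_iff)
  have "LK_exponent A J z \<le> C * max 2 (r\<^sup>2)" if "norm z \<le> r" for z
    using C[of z] that \<open>0 \<le> C\<close>
    by (smt (verit, best) mult_left_mono norm_ge_zero power_mono)
  then show ?thesis
    by (intro bdd_aboveI2) auto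
qed

lemma LK_exponent_double:
  fixes J :: "'a::euclidean_space \<Rightarrow> real"
  assumes "linear A" "J \<in> borel_measurable lborel" "\<And>z. 0 \<le> J z"
    and "integrable lborel (\<lambda>z. min 1 ((norm z)\<^sup>2) * J z)"
  shows "LK_exponent A J (2 *\<^sub>R \<xi>) \<le> 4 * LK_exponent A J \<xi>"
proof -
  have "1 - cos (2 * x) \<le> 4 * (1 - cos x)" for x :: real
    using cos_double_cos[of x] sum_power2_ge_zero[of "cos x - 1" 0]
    by (simp add: power2_eq_square algebra_simps)
  then have "(LINT y|lborel. (1 - cos ((2 *\<^sub>R \<xi>) \<bullet> y)) * J y)
      \<le> (LINT y|lborel. 4 * ((1 - cos (\<xi> \<bullet> y)) * J y))"
    using assms(3)
    by (intro integral_mono LK_integrand_integrable[OF assms(2-4)] integrable_mult_right)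
       (auto intro!: mult_right_mono simp: mult.assoc[symmetric])
  moreover have "(2 *\<^sub>R \<xi>) \<bullet> A (2 *\<^sub>R \<xi>) = 4 * (\<xi> \<bullet> A \<xi>)"
    using linear_cmul[OF assms(1), of 2 \<xi>] by simp
  ultimately show ?thesis
    unfolding LK_exponent_def by simp
qed

definition Psi_star_ratio :: "('a::euclidean_space \<Rightarrow> real) \<Rightarrow> real \<Rightarrow> real" where
  "Psi_star_ratio \<Psi> K = (SUP r\<in>{0<..}. Psi_star \<Psi> r / Psi_star \<Psi> (K * r))"

locale levy_exponent =
  fixes \<Psi> :: "'a::euclidean_space \<Rightarrow> real"
  assumes nonneg: "0 \<le> \<Psi> \<xi>"
    and bdd_above_ball: "bdd_above (\<Psi> ` {z. norm z \<le> r})"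
    and double: "\<Psi> (2 *\<^sub>R \<xi>) \<le> 4 * \<Psi> \<xi>"
    and unbounded: "\<not> bdd_above (range \<Psi>)"
begin

lemma le_Psi_star: "norm z \<le> r \<Longrightarrow> \<Psi> z \<le> Psi_star \<Psi> r"
  unfolding Psi_star_def by (rule cSUP_upper[OF _ bdd_above_ball]) simp

lemma Psi_star_mono: "0 \<le> r \<Longrightarrow> r \<le> r' \<Longrightarrow> Psi_star \<Psi> r \<le> Psi_star \<Psi> r'"
  unfolding Psi_star_def by (rule cSUP_subset_mono[OF _ bdd_above_ball]) (auto intro!: exI[where x=0])

lemma Psi_star_nonneg: "0 \<le> r \<Longrightarrow> 0 \<le> Psi_star \<Psi> r"
  using le_Psi_star[of 0 r] nonneg[of 0] by simp

lemma double_power: "\<Psi> (2 ^ n *\<^sub>R \<xi>) \<le> 4 ^ n * \<Psi> \<xi>"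
proof (induction n)
  case (Suc n)
  have "\<Psi> (2 ^ Suc n *\<^sub>R \<xi>) \<le> 4 * \<Psi> (2 ^ n *\<^sub>R \<xi>)"
    using double[of "2 ^ n *\<^sub>R \<xi>"] by simp
  also have "\<dots> \<le> 4 ^ Suc n * \<Psi> \<xi>"
    using Suc.IH by simp
  finally show ?case .
qed simp

lemma exists_gt: "\<exists>z. b < \<Psi> z"
  using unbounded unfolding bdd_above_def by (auto simp: not_le)

lemma Psi_star_pos:
  assumes "0 < r"
  shows "0 < Psi_star \<Psi> r"
  \<comment> \<open>Otherwise \<open>\<Psi>\<close> vanishes on a ball, hence everywhere by doubling.\<close>
proof (rule ccontr)
  assume "\<not> 0 < Psi_star \<Psi> r"
  obtain z where "0 < \<Psi> z"
    using exists_gt by blast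
  moreover obtain n where "norm z / r < 2 ^ n"
    using real_arch_pow[of 2 "norm z / r"] by auto
  then have "norm (inverse (2 ^ n) *\<^sub>R z) \<le> r"
    using \<open>0 < r\<close> by (simp add: field_simps)
  then have "\<Psi> (inverse (2 ^ n) *\<^sub>R z) \<le> 0"
    using le_Psi_star \<open>\<not> 0 < Psi_star \<Psi> r\<close> by (meson not_less order_trans)
  then have "\<Psi> z \<le> 0"
    using double_power[of n "inverse (2 ^ n) *\<^sub>R z"]
      mult_nonneg_nonpos[of "4 ^ n" "\<Psi> (inverse (2 ^ n) *\<^sub>R z)"]
    by simp
  ultimately show False
    by simp
qed

lemma Psi_star_le_ratio:
  assumes "1 \<le> K" "0 < r"
  shows "Psi_star \<Psi> r \<le> Psi_star_ratio \<Psi> K * Psi_star \<Psi> (K * r)"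
proof -
  have "Psi_star \<Psi> r / Psi_star \<Psi> (K * r) \<le> 1" if "0 < r" for r
    using Psi_star_mono[of r "K * r"] Psi_star_pos[of "K * r"] that \<open>1 \<le> K\<close> by simp
  then have "bdd_above ((\<lambda>r. Psi_star \<Psi> r / Psi_star \<Psi> (K * r)) ` {0<..})"
    by (intro bdd_aboveI2) auto
  then have "Psi_star \<Psi> r / Psi_star \<Psi> (K * r) \<le> Psi_star_ratio \<Psi> K"
    unfolding Psi_star_ratio_def using \<open>0 < r\<close> by (intro cSUP_upper) auto
  then show ?thesis
    using Psi_star_pos[of "K * r"] assms by (simp add: divide_le_eq)
qed

lemma Psi_star_ratio_nonneg:
  assumes "1 \<le> K"
  shows "0 \<le> Psi_star_ratio \<Psi> K"
proof -
  have "0 < Psi_star_ratio \<Psi> K * Psi_star \<Psi> K"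
    using Psi_star_le_ratio[of K 1] Psi_star_pos[of 1] assms by simp
  then show ?thesis
    using Psi_star_pos[of K] assms by (simp add: zero_less_mult_iff)
qed

lemma Psi_star_arbitrarily_small:
  assumes ratio: "(Psi_star_ratio \<Psi> \<longlongrightarrow> 0) at_top" and "0 < \<epsilon>"
  obtains \<rho> where "0 < \<rho>" "Psi_star \<Psi> \<rho> < \<epsilon>"
proof -
  have "eventually (\<lambda>K. 1 \<le> K \<and> Psi_star_ratio \<Psi> K < 1) at_top"
    by (intro eventually_conj eventually_ge_at_top order_tendstoD(2)[OF ratio]) simp
  then obtain K where K: "1 \<le> K" "Psi_star_ratio \<Psi> K < 1"
    unfolding eventually_at_top_linorder by blast
  have decay: "Psi_star \<Psi> (1 / K ^ n) \<le> Psi_star_ratio \<Psi> K ^ n * Psi_star \<Psi> 1" for n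
  proof (induction n)
    case (Suc n)
    have "Psi_star \<Psi> (1 / K ^ Suc n) \<le> Psi_star_ratio \<Psi> K * Psi_star \<Psi> (1 / K ^ n)"
      using Psi_star_le_ratio[of K "1 / K ^ Suc n"] K by simp
    also have "\<dots> \<le> Psi_star_ratio \<Psi> K ^ Suc n * Psi_star \<Psi> 1"
      using mult_left_mono[OF Suc.IH Psi_star_ratio_nonneg[OF K(1)]] by (simp add: mult.assoc)
    finally show ?case .
  qed simp
  have "(\<lambda>n. Psi_star_ratio \<Psi> K ^ n * Psi_star \<Psi> 1) \<longlonglongrightarrow> 0"
    using K Psi_star_ratio_nonneg[OF K(1)] by (intro tendsto_mult_left_zero LIMSEQ_power_zero) simp
  then have "eventually (\<lambda>n. Psi_star_ratio \<Psi> K ^ n * Psi_star \<Psi> 1 < \<epsilon>) sequentially"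
    using order_tendstoD(2) \<open>0 < \<epsilon>\<close> by blast
  then obtain n where "Psi_star_ratio \<Psi> K ^ n * Psi_star \<Psi> 1 < \<epsilon>"
    unfolding eventually_sequentially by blast
  then show ?thesis
    using that[of "1 / K ^ n"] decay[of n] K by simp
qed

lemma Phi_fun_gt_iff:
  assumes "0 < s" "0 < t"
  shows "t < Phi_fun \<Psi> s \<longleftrightarrow> Psi_star \<Psi> (1 / s) < 1 / t"
  using assms Psi_star_pos[of "1 / s"] by (simp add: Phi_fun_def field_simps)

lemma Phi_inv_set_nonempty:
  assumes "0 < t" "0 < \<rho>" "Psi_star \<Psi> \<rho> < 1 / t"
  shows "{s. 0 < s \<and> t < Phi_fun \<Psi> s} \<noteq> {}"
proof -
  have "1 / \<rho> \<in> {s. 0 < s \<and> t < Phi_fun \<Psi> s}"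
    using assms Phi_fun_gt_iff[of "1 / \<rho>" t] by simp
  then show ?thesis
    by blast
qed

lemma Phi_inv_pos:
  assumes "0 < t" "0 < \<rho>" "Psi_star \<Psi> \<rho> < 1 / t"
  shows "0 < Phi_inv \<Psi> t"
proof -
  obtain z where z: "1 / t < \<Psi> z"
    using exists_gt by blast
  have "1 / (norm z + 1) \<le> s" if "0 < s" "t < Phi_fun \<Psi> s" for s
  proof -
    have "Psi_star \<Psi> (1 / s) < 1 / t"
      using Phi_fun_gt_iff[OF that(1) assms(1)] that(2) by simp
    then have "1 / s < norm z"
      using le_Psi_star[of z "1 / s"] z by linarith
    then have "1 \<le> s * (norm z + 1)"
      using that(1) by (simp add: field_simps)
    moreover have "0 < norm z + 1"
      by (simp add: add_nonneg_pos)
    ultimately show ?thesis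
      by (simp add: divide_le_eq)
  qed
  then have "1 / (norm z + 1) \<le> Phi_inv \<Psi> t"
    unfolding Phi_inv_def by (intro cInf_greatest Phi_inv_set_nonempty[OF assms]) auto
  moreover have "0 < 1 / (norm z + 1)"
    by (simp add: add_nonneg_pos)
  ultimately show ?thesis
    by linarith
qed

lemma Psi_star_Phi_inv:
  assumes "0 < t" "0 < \<rho>" "Psi_star \<Psi> \<rho> < 1 / t"
  shows "t * Psi_star \<Psi> (1 / (2 * Phi_inv \<Psi> t)) < 1"
proof -
  have pos: "0 < Phi_inv \<Psi> t"
    using Phi_inv_pos[OF assms] .
  then have "Inf {s. 0 < s \<and> t < Phi_fun \<Psi> s} < 2 * Phi_inv \<Psi> t"
    unfolding Phi_inv_def by simp
  then obtain s where s: "0 < s" "t < Phi_fun \<Psi> s" "s < 2 * Phi_inv \<Psi> t"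
    using cInf_less_iff[OF Phi_inv_set_nonempty[OF assms] bdd_belowI[of _ 0]] by auto
  have "Psi_star \<Psi> (1 / (2 * Phi_inv \<Psi> t)) \<le> Psi_star \<Psi> (1 / s)"
    using s pos by (intro Psi_star_mono) (auto simp: frac_le)
  also have "\<dots> < 1 / t"
    using Phi_fun_gt_iff[OF s(1) assms(1)] s(2) by simp
  finally show ?thesis
    using assms(1) by (simp add: field_simps)
qed

lemma law_tail_le_ratio:
  fixes N :: "'a measure" and t c M :: real
  assumes ratio: "(Psi_star_ratio \<Psi> \<longlongrightarrow> 0) at_top"
    and law: "prob_space N" "sets N = sets borel" "0 < t"
    and char: "\<And>\<xi>. char_fun N \<xi> = complex_of_real (exp (- t * \<Psi> \<xi>))"
    and "0 < c" and K: "1 \<le> c * M / (4 * real DIM('a))"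
  shows "measure N {x. c * M * Phi_inv \<Psi> t < norm x}
    \<le> 2 * real DIM('a) * Psi_star_ratio \<Psi> (c * M / (4 * real DIM('a)))"
proof -
  define d where "d = real DIM('a)"
  define K where "K = c * M / (4 * d)"
  define s where "s = Phi_inv \<Psi> t"
  obtain \<rho> where \<rho>: "0 < \<rho>" "Psi_star \<Psi> \<rho> < 1 / t"
    using Psi_star_arbitrarily_small[OF ratio, of "1 / t"] \<open>0 < t\<close> by auto
  have s: "0 < s" "t * Psi_star \<Psi> (1 / (2 * s)) < 1"
    unfolding s_def using Phi_inv_pos Psi_star_Phi_inv \<open>0 < t\<close> \<rho> by auto
  have "0 < d" "1 \<le> K"
    using K by (simp_all add: d_def K_def)
  then have "0 < c * M"
    by (simp add: K_def le_divide_eq)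
  then have "0 < M"
    using \<open>0 < c\<close> by (simp add: zero_less_mult_iff)
  have "measure N {x. c * M * s < norm x} \<le> 2 * d * t * Psi_star \<Psi> (2 * d / (c * M * s))"
    unfolding d_def
    by (rule norm_tail_le_exponent_bound[OF law(1,2) _ _ _ char le_Psi_star])
       (use \<open>0 < c\<close> \<open>0 < M\<close> s(1) law(3) in \<open>auto intro: Psi_star_nonneg\<close>)
  also have "\<dots> \<le> 2 * d * t * (Psi_star_ratio \<Psi> K * Psi_star \<Psi> (K * (2 * d / (c * M * s))))"
    using \<open>1 \<le> K\<close> \<open>0 < d\<close> \<open>0 < c\<close> \<open>0 < M\<close> s(1) law(3)
    by (intro mult_left_mono Psi_star_le_ratio) auto
  also have "K * (2 * d / (c * M * s)) = 1 / (2 * s)"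
    using \<open>0 < d\<close> \<open>0 < c\<close> \<open>0 < M\<close> s(1) by (simp add: K_def field_simps)
  also have "2 * d * t * (Psi_star_ratio \<Psi> K * Psi_star \<Psi> (1 / (2 * s)))
      = 2 * d * Psi_star_ratio \<Psi> K * (t * Psi_star \<Psi> (1 / (2 * s)))"
    by (simp add: algebra_simps)
  also have "\<dots> \<le> 2 * d * Psi_star_ratio \<Psi> K"
    using s \<open>0 < d\<close> \<open>0 < t\<close> Psi_star_ratio_nonneg[OF \<open>1 \<le> K\<close>]
      Psi_star_nonneg[of "1 / (2 * s)"]
    by (intro mult_right_le_one_le) auto
  finally show ?thesis
    by (simp add: s_def d_def K_def)
qed

lemma sup_law_tail_le_ratio:
  fixes \<mu> :: "real \<Rightarrow> 'a measure" and c M :: real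
  assumes ratio: "(Psi_star_ratio \<Psi> \<longlongrightarrow> 0) at_top"
    and law: "\<And>t. 0 < t \<Longrightarrow> prob_space (\<mu> t)"
      "\<And>t. 0 < t \<Longrightarrow> sets (\<mu> t) = sets borel"
    and char: "\<And>t \<xi>. 0 < t \<Longrightarrow> char_fun (\<mu> t) \<xi> = complex_of_real (exp (- t * \<Psi> \<xi>))"
    and "0 < c" and K: "1 \<le> c * M / (4 * real DIM('a))"
  shows "0 \<le> (SUP t\<in>{0<..}. measure (\<mu> t) {x. c * M * Phi_inv \<Psi> t < norm x})"
    and "(SUP t\<in>{0<..}. measure (\<mu> t) {x. c * M * Phi_inv \<Psi> t < norm x})
      \<le> 2 * real DIM('a) * Psi_star_ratio \<Psi> (c * M / (4 * real DIM('a)))"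
proof -
  have bound: "measure (\<mu> t) {x. c * M * Phi_inv \<Psi> t < norm x}
      \<le> 2 * real DIM('a) * Psi_star_ratio \<Psi> (c * M / (4 * real DIM('a)))" if "0 < t" for t
    using law_tail_le_ratio[OF ratio law[OF that] that char[OF that] \<open>0 < c\<close> K] .
  then have "bdd_above ((\<lambda>t. measure (\<mu> t) {x. c * M * Phi_inv \<Psi> t < norm x}) ` {0<..})"
    by (intro bdd_aboveI2) auto
  then have "measure (\<mu> 1) {x. c * M * Phi_inv \<Psi> 1 < norm x}
      \<le> (SUP t\<in>{0<..}. measure (\<mu> t) {x. c * M * Phi_inv \<Psi> t < norm x})"
    by (intro cSUP_upper) auto
  then show "0 \<le> (SUP t\<in>{0<..}. measure (\<mu> t) {x. c * M * Phi_inv \<Psi> t < norm x})"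
    using measure_nonneg[of "\<mu> 1"] by (rule order_trans[rotated])
  show "(SUP t\<in>{0<..}. measure (\<mu> t) {x. c * M * Phi_inv \<Psi> t < norm x})
      \<le> 2 * real DIM('a) * Psi_star_ratio \<Psi> (c * M / (4 * real DIM('a)))"
    using bound by (intro cSUP_least) auto
qed

end

theorem lemma4p3:
  fixes A :: "'a::euclidean_space \<Rightarrow> 'a" and J :: "'a \<Rightarrow> real"
    and \<mu> :: "real \<Rightarrow> 'a measure"
  assumes A_lin: "linear A"
    and A_sym: "\<And>x y. A x \<bullet> y = x \<bullet> A y"
    and A_nonneg: "\<And>x. x \<bullet> A x \<ge> 0"
    and J_meas: "J \<in> borel_measurable lborel"
    and J_nonneg: "\<And>z. J z \<ge> 0"
    and J_sym: "\<And>z. J (- z) = J z"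
    and J_int: "integrable lborel (\<lambda>z. min 1 (norm z ^ 2) * J z)"
    and not_CP: "\<not> bdd_above (range (LK_exponent A J))"
    and law_prob: "\<And>t. t > 0 \<Longrightarrow> prob_space (\<mu> t)"
    and law_sets: "\<And>t. t > 0 \<Longrightarrow> sets (\<mu> t) = sets borel"
    and law_cf: "\<And>t \<xi>. t > 0 \<Longrightarrow> char_fun (\<mu> t) \<xi> = complex_of_real (exp (- t * LK_exponent A J \<xi>))"
    and hyp: "((\<lambda>M. SUP r\<in>{0<..}. Psi_star (LK_exponent A J) r / Psi_star (LK_exponent A J) (M * r))
               \<longlongrightarrow> 0) at_top"
    and c_pos: "c > 0"
  shows "((\<lambda>M. c powr (- real DIM('a)) *
            (SUP t\<in>{0<..}. measure (\<mu> t) {x. norm x > c * M * Phi_inv (LK_exponent A J) t}))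
          \<longlongrightarrow> 0) at_top"
proof -
  define \<Psi> where "\<Psi> = LK_exponent A J"
  define d where "d = real DIM('a)"
  define F where
    "F M = c powr (- d) * (SUP t\<in>{0<..}. measure (\<mu> t) {x. norm x > c * M * Phi_inv \<Psi> t})" for M
  define bound where "bound M = c powr (- d) * (2 * d * Psi_star_ratio \<Psi> (c * M / (4 * d)))" for M
  interpret levy_exponent \<Psi>
    unfolding \<Psi>_def using assms
    by unfold_locales (auto intro: LK_exponent_nonneg LK_exponent_bdd_above_ball LK_exponent_double)
  have ratio: "(Psi_star_ratio \<Psi> \<longlongrightarrow> 0) at_top"
    using hyp unfolding Psi_star_ratio_def \<Psi>_def .
  have "filterlim (\<lambda>M. c / (4 * d) * M) at_top at_top"
    using c_pos by (intro filterlim_tendsto_pos_mult_at_top[OF tendsto_const _ filterlim_ident])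
      (simp add: d_def)
  then have bound_lim: "(bound \<longlongrightarrow> 0) at_top"
    unfolding bound_def using filterlim_compose[OF ratio] by (auto intro!: tendsto_mult_right_zero)
  have F_bounds: "0 \<le> F M \<and> F M \<le> bound M" if "4 * d / c \<le> M" for M
  proof -
    have K: "1 \<le> c * M / (4 * real DIM('a))"
      using that c_pos by (simp add: d_def field_simps)
    have "0 \<le> (SUP t\<in>{0<..}. measure (\<mu> t) {x. c * M * Phi_inv \<Psi> t < norm x})"
      "(SUP t\<in>{0<..}. measure (\<mu> t) {x. c * M * Phi_inv \<Psi> t < norm x})
        \<le> 2 * real DIM('a) * Psi_star_ratio \<Psi> (c * M / (4 * real DIM('a)))"
      by (rule sup_law_tail_le_ratio[OF ratio _ _ _ c_pos K],
          fact law_prob, fact law_sets, fact law_cf[folded \<Psi>_def])+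
    moreover have "0 \<le> c powr (- d)"
      by simp
    ultimately show ?thesis
      unfolding F_def bound_def d_def by (simp add: mult_left_mono)
  qed
  have "eventually (\<lambda>M. 0 \<le> F M) at_top" "eventually (\<lambda>M. F M \<le> bound M) at_top"
    using eventually_ge_at_top[of "4 * d / c"] by (eventually_elim, use F_bounds in blast)+
  then have "(F \<longlongrightarrow> 0) at_top"
    by (rule tendsto_sandwich[OF _ _ tendsto_const bound_lim])
  then show ?thesis
    unfolding F_def \<Psi>_def d_def .
qed

end
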